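(* Let $0\le t_1<t_2$, let $m,k>0$ be constants, let $f\in C[t_1,t_2]$, and let $f^1,f^2\in\mathbb{R}$ be given constants. For $u\in C^2[t_1,t_2]$ define $$I^\tau[u]=\frac{m}{2}\,[u',u']_{t_1}^{t_2}+\frac{k}{2}\,[u,u]_{t_1}^{t_2}-[f,u]_{t_1}^{t_2}-f^1\,u(t_2)+f^2\,u(t_1).$$ Suppose $u\in C^2[t_1,t_2]$ is a stationary point of $I^\tau$, i.e. $\frac{d}{d\varepsilon}I^\tau[u+\varepsilon\eta]\big|_{\varepsilon=0}=0$ for every $\eta\in C^2[t_1,t_2]$. Then $$m u''(s)+k u(s)=f(s),\quad s\in(t_1,t_2),\qquad u'(t_1)=f^1/m,\quad u'(t_2)=f^2/m .$$
   Context: For an interval $[t_1,t_2]$ with $t_1\ge0$ and functions $g,h\in L^2(t_1,t_2)$, the convolution over $[t_1,t_2]$ is defined as $$[g,h]_{t_1}^{t_2}=\int_0^{t_2-t_1}g(t_1+s)\,h(t_2-s)\,ds=\int_{t_1}^{t_2}g(s)\,h(t_1+t_2-s)\,ds .$$ (In the paper the last two terms of $I^\tau$ are written as $-[\tilde f^1-\tilde f^2,u]_{t_1}^{t_2}$ with $\tilde f^1=f^1\delta(s-t_1)$, $\tilde f^2=f^2\delta(s-t_2)$, which by convention evaluate to $-f^1u(t_2)+f^2u(t_1)$.) *)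

theory Defs
  imports "HOL-Analysis.Analysis"
begin

definition conv :: "real \<Rightarrow> real \<Rightarrow> (real \<Rightarrow> real) \<Rightarrow> (real \<Rightarrow> real) \<Rightarrow> real" where
  "conv t1 t2 g h = integral {t1..t2} (\<lambda>s. g s * h (t1 + t2 - s))"

definition dI :: "real \<Rightarrow> real \<Rightarrow> (real \<Rightarrow> real) \<Rightarrow> real \<Rightarrow> real" where
  "dI t1 t2 u s = vector_derivative u (at s within {t1..t2})"

definition C2 :: "real \<Rightarrow> real \<Rightarrow> (real \<Rightarrow> real) \<Rightarrow> bool" where
  "C2 t1 t2 u \<longleftrightarrow>
     (\<forall>s\<in>{t1..t2}. u differentiable (at s within {t1..t2})) \<and>
     (\<forall>s\<in>{t1..t2}. dI t1 t2 u differentiable (at s within {t1..t2})) \<and>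
     continuous_on {t1..t2} (dI t1 t2 (dI t1 t2 u))"

definition Itau :: "real \<Rightarrow> real \<Rightarrow> real \<Rightarrow> real \<Rightarrow> (real \<Rightarrow> real) \<Rightarrow> real \<Rightarrow> real
                     \<Rightarrow> (real \<Rightarrow> real) \<Rightarrow> real" where
  "Itau t1 t2 m k f f1 f2 u =
     m / 2 * conv t1 t2 (dI t1 t2 u) (dI t1 t2 u) + k / 2 * conv t1 t2 u u
     - conv t1 t2 f u - f1 * u t2 + f2 * u t1"

end

theory Submission
  imports Defs
begin

text \<open>
  Since \<open>[g,h]\<close> is symmetric and bilinear, \<open>I\<^sup>\<tau>[u + \<epsilon>\<eta>]\<close> is a quadratic polynomial in \<open>\<epsilon>\<close>;
  integrating \<open>[u',\<eta>']\<close> by parts shows that its linear coefficient is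
  \<open>[m u'' + k u - f, \<eta>] + (m u'(t\<^sub>1) - f\<^sup>1) \<eta>(t\<^sub>2) + (f\<^sup>2 - m u'(t\<^sub>2)) \<eta>(t\<^sub>1)\<close>. Test functions vanishing at both ends
  give the Euler--Lagrange equation by the fundamental lemma of the calculus of variations,
  and the two linear test functions \<open>s - t\<^sub>1\<close>, \<open>t\<^sub>2 - s\<close> then give the natural boundary conditions.
\<close>

lemma integral_reflect_Icc:
  fixes \<phi> :: "real \<Rightarrow> real"
  shows "integral {a..b} (\<lambda>s. \<phi> (a + b - s)) = integral {a..b} \<phi>"
proof -
  have "integral {-(-a)..-(-b)} (\<lambda>x. \<phi> (a + b + - x)) = integral {-b..-a} (\<lambda>x. \<phi> (a + b + x))"
    using Henstock_Kurzweil_Integration.integral_reflect_real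
        [where f = "\<lambda>x. \<phi> (a + b + x)" and a = "-b" and b = "-a"]
    by simp
  also have "\<dots> = integral {-b..-a} (\<phi> \<circ> (+) (a + b))" by (simp add: o_def)
  also have "\<dots> = integral {-b + (a + b)..-a + (a + b)} \<phi>" by (rule integral_shift_Icc_real)
  finally show ?thesis by simp
qed

lemma reflect_image_Icc: "(\<lambda>s. a + b - s) ` {a..b} = {a..(b::real)}"
proof
  show "{a..b} \<subseteq> (\<lambda>s. a + b - s) ` {a..b}"
    by (auto intro!: image_eqI[where x = "a + b - x" for x])
qed auto

lemma continuous_on_reflect_Icc:
  fixes h :: "real \<Rightarrow> real"
  assumes "continuous_on {a..b} h"
  shows "continuous_on {a..b} (\<lambda>s. h (a + b - s))"
  by (rule continuous_on_compose2[OF assms]) (auto intro!: continuous_intros)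

lemma has_vector_derivative_reflect_Icc:
  fixes h :: "real \<Rightarrow> real"
  assumes "(h has_vector_derivative h') (at (a + b - x) within {a..b})"
  shows "((\<lambda>s. h (a + b - s)) has_vector_derivative - h') (at x within {a..b})"
proof -
  have "((\<lambda>s. a + b - s) has_vector_derivative -1) (at x within {a..b})"
    by (auto intro!: derivative_eq_intros)
  from vector_diff_chain_within[OF this] have
    "((h \<circ> (\<lambda>s. a + b - s)) has_vector_derivative (-1) *\<^sub>R h') (at x within {a..b})"
    using assms by (simp add: reflect_image_Icc)
  then show ?thesis by (simp add: o_def)
qed

lemma conv_commute: "conv t1 t2 g h = conv t1 t2 h g"
  unfolding conv_def
  using integral_reflect_Icc[where \<phi> = "\<lambda>s. g s * h (t1 + t2 - s)" and a = t1 and b = t2]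
  by (simp add: mult.commute)

lemma conv_cong:
  assumes "\<And>s. s \<in> {t1..t2} \<Longrightarrow> g s = g' s" "\<And>s. s \<in> {t1..t2} \<Longrightarrow> h s = h' s"
  shows "conv t1 t2 g h = conv t1 t2 g' h'"
  unfolding conv_def by (rule integral_cong) (simp add: assms)

lemma has_integral_conv:
  assumes "continuous_on {t1..t2} g" "continuous_on {t1..t2} h"
  shows "((\<lambda>s. g s * h (t1 + t2 - s)) has_integral conv t1 t2 g h) {t1..t2}"
  unfolding conv_def
  by (intro integrable_integral integrable_continuous_real continuous_on_mult
        assms(1) continuous_on_reflect_Icc assms(2))

lemma conv_mult_left: "conv t1 t2 (\<lambda>s. c * g s) h = c * conv t1 t2 g h"
  unfolding conv_def by (simp add: mult.assoc)

lemma conv_mult_right: "conv t1 t2 g (\<lambda>s. c * h s) = c * conv t1 t2 g h"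
  by (metis conv_commute conv_mult_left)

lemma conv_add_left:
  assumes "continuous_on {t1..t2} g1" "continuous_on {t1..t2} g2" "continuous_on {t1..t2} h"
  shows "conv t1 t2 (\<lambda>s. g1 s + g2 s) h = conv t1 t2 g1 h + conv t1 t2 g2 h"
proof -
  have "((\<lambda>s. g1 s * h (t1 + t2 - s) + g2 s * h (t1 + t2 - s)) has_integral
          conv t1 t2 g1 h + conv t1 t2 g2 h) {t1..t2}"
    by (intro has_integral_add has_integral_conv assms)
  then show ?thesis
    unfolding conv_def[of t1 t2 "\<lambda>s. g1 s + g2 s"] by (simp add: distrib_right integral_unique)
qed

lemma conv_add_right:
  assumes "continuous_on {t1..t2} g" "continuous_on {t1..t2} h1" "continuous_on {t1..t2} h2"
  shows "conv t1 t2 g (\<lambda>s. h1 s + h2 s) = conv t1 t2 g h1 + conv t1 t2 g h2"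
  using conv_add_left[OF assms(2,3,1)] by (simp add: conv_commute)

lemma conv_diff_left:
  assumes "continuous_on {t1..t2} g1" "continuous_on {t1..t2} g2" "continuous_on {t1..t2} h"
  shows "conv t1 t2 (\<lambda>s. g1 s - g2 s) h = conv t1 t2 g1 h - conv t1 t2 g2 h"
proof -
  have "((\<lambda>s. g1 s * h (t1 + t2 - s) - g2 s * h (t1 + t2 - s)) has_integral
          conv t1 t2 g1 h - conv t1 t2 g2 h) {t1..t2}"
    by (intro has_integral_diff has_integral_conv assms)
  then show ?thesis
    unfolding conv_def[of t1 t2 "\<lambda>s. g1 s - g2 s"] by (simp add: left_diff_distrib integral_unique)
qed

lemma conv_add_mult_self:
  assumes g: "continuous_on {t1..t2} g" and h: "continuous_on {t1..t2} h"
  shows "conv t1 t2 (\<lambda>s. g s + c * h s) (\<lambda>s. g s + c * h s) =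
    conv t1 t2 g g + 2 * c * conv t1 t2 g h + c\<^sup>2 * conv t1 t2 h h"
proof -
  have ch: "continuous_on {t1..t2} (\<lambda>s. c * h s)" using h by (rule continuous_on_mult_left)
  have gch: "continuous_on {t1..t2} (\<lambda>s. g s + c * h s)" using g ch by (rule continuous_on_add)
  show ?thesis
    using conv_add_left[OF g ch gch] conv_add_right[OF g g ch] conv_add_right[OF ch g ch]
    by (simp add: conv_mult_left conv_mult_right conv_commute[of t1 t2 h g] power2_eq_square
        algebra_simps)
qed

lemma dI_eqI:
  assumes "t1 < t2" "s \<in> {t1..t2}" "(v has_vector_derivative v') (at s within {t1..t2})"
  shows "dI t1 t2 v s = v'"
  unfolding dI_def by (rule vector_derivative_within_closed_interval[OF assms])

lemma C2_has_vector_derivative: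
  assumes "C2 t1 t2 v" "s \<in> {t1..t2}"
  shows "(v has_vector_derivative dI t1 t2 v s) (at s within {t1..t2})"
    and "(dI t1 t2 v has_vector_derivative dI t1 t2 (dI t1 t2 v) s) (at s within {t1..t2})"
  using assms unfolding C2_def dI_def by (auto simp: vector_derivative_works[symmetric])

lemma C2_has_vector_derivative_at:
  assumes "C2 t1 t2 v" "s \<in> {t1<..<t2}"
  shows "(v has_vector_derivative dI t1 t2 v s) (at s)"
    and "(dI t1 t2 v has_vector_derivative dI t1 t2 (dI t1 t2 v) s) (at s)"
  using C2_has_vector_derivative[OF assms(1), of s] assms(2) by (simp_all add: at_within_Icc_at)

lemma C2_continuous_on:
  assumes "C2 t1 t2 v"
  shows "continuous_on {t1..t2} v" "continuous_on {t1..t2} (dI t1 t2 v)"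
    and "continuous_on {t1..t2} (dI t1 t2 (dI t1 t2 v))"
  using assms unfolding C2_def
  by (auto simp: continuous_on_eq_continuous_within intro: differentiable_imp_continuous_within)

lemma dI_has_vector_derivative:
  assumes "t1 < t2"
    and "\<And>s. s \<in> {t1..t2} \<Longrightarrow> (v has_vector_derivative v1 s) (at s within {t1..t2})"
    and "(v1 has_vector_derivative v2) (at s within {t1..t2})" "s \<in> {t1..t2}"
  shows "(dI t1 t2 v has_vector_derivative v2) (at s within {t1..t2})"
  by (rule has_vector_derivative_transform[OF assms(4) _ assms(3)]) (simp add: dI_eqI assms(1,2))

lemma C2I:
  assumes "t1 < t2"
    and v1: "\<And>s. s \<in> {t1..t2} \<Longrightarrow> (v has_vector_derivative v1 s) (at s within {t1..t2})"
    and v2: "\<And>s. s \<in> {t1..t2} \<Longrightarrow> (v1 has_vector_derivative v2 s) (at s within {t1..t2})"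
    and "continuous_on {t1..t2} v2"
  shows "C2 t1 t2 v"
proof -
  have dI_v1: "(dI t1 t2 v has_vector_derivative v2 s) (at s within {t1..t2})"
    if "s \<in> {t1..t2}" for s
    using dI_has_vector_derivative[OF assms(1) v1 v2[OF that] that] .
  have "continuous_on {t1..t2} (dI t1 t2 (dI t1 t2 v))"
    using assms(4) by (rule continuous_on_eq) (simp add: dI_eqI[OF assms(1) _ dI_v1])
  then show ?thesis
    unfolding C2_def using differentiableI_vector[OF v1] differentiableI_vector[OF dI_v1] by blast
qed

lemma C2_reflect:
  assumes "t1 < t2" "C2 t1 t2 \<eta>"
  shows "C2 t1 t2 (\<lambda>s. \<eta> (t1 + t2 - s))"
    and "s \<in> {t1..t2} \<Longrightarrow> dI t1 t2 (\<lambda>s. \<eta> (t1 + t2 - s)) s = - dI t1 t2 \<eta> (t1 + t2 - s)"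
proof -
  have d1: "((\<lambda>s. \<eta> (t1 + t2 - s)) has_vector_derivative - dI t1 t2 \<eta> (t1 + t2 - s))
      (at s within {t1..t2})" if "s \<in> {t1..t2}" for s
    using that by (intro has_vector_derivative_reflect_Icc C2_has_vector_derivative assms) auto
  have d2: "((\<lambda>s. - dI t1 t2 \<eta> (t1 + t2 - s)) has_vector_derivative dI t1 t2 (dI t1 t2 \<eta>) (t1 + t2 - s))
      (at s within {t1..t2})" if "s \<in> {t1..t2}" for s
    using has_vector_derivative_minus[OF has_vector_derivative_reflect_Icc
        [OF C2_has_vector_derivative(2)[OF assms(2)]]] that by simp
  show "C2 t1 t2 (\<lambda>s. \<eta> (t1 + t2 - s))"
    by (rule C2I[OF assms(1) d1 d2 continuous_on_reflect_Icc[OF C2_continuous_on(3)[OF assms(2)]]])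
  show "s \<in> {t1..t2} \<Longrightarrow> dI t1 t2 (\<lambda>s. \<eta> (t1 + t2 - s)) s = - dI t1 t2 \<eta> (t1 + t2 - s)"
    by (rule dI_eqI[OF assms(1) _ d1])
qed

lemma integral_by_parts_C2:
  assumes "t1 < t2" "C2 t1 t2 u" "C2 t1 t2 w"
  shows "integral {t1..t2} (\<lambda>s. dI t1 t2 (dI t1 t2 u) s * w s) =
    dI t1 t2 u t2 * w t2 - dI t1 t2 u t1 * w t1 - integral {t1..t2} (\<lambda>s. dI t1 t2 u s * dI t1 t2 w s)"
proof -
  let ?I = "integral {t1..t2} (\<lambda>s. dI t1 t2 u s * dI t1 t2 w s)"
  have "((\<lambda>s. dI t1 t2 u s * dI t1 t2 w s) has_integral ?I) {t1..t2}"
    by (intro integrable_integral integrable_continuous_real continuous_on_mult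
          C2_continuous_on assms)
  then have "((\<lambda>s. dI t1 t2 (dI t1 t2 u) s * w s) has_integral
      dI t1 t2 u t2 * w t2 - dI t1 t2 u t1 * w t1 - ?I) {t1..t2}"
    using assms
    by (intro integration_by_parts_interior[OF bounded_bilinear_mult,
          of t1 t2 "dI t1 t2 u" w "dI t1 t2 (dI t1 t2 u)" "dI t1 t2 w"])
      (simp_all add: C2_continuous_on C2_has_vector_derivative_at)
  then show ?thesis by (rule integral_unique)
qed

lemma conv_deriv_deriv:
  assumes "t1 < t2" "C2 t1 t2 u" "C2 t1 t2 \<eta>"
  shows "conv t1 t2 (dI t1 t2 u) (dI t1 t2 \<eta>) =
    conv t1 t2 (dI t1 t2 (dI t1 t2 u)) \<eta> - dI t1 t2 u t2 * \<eta> t1 + dI t1 t2 u t1 * \<eta> t2"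
proof -
  let ?w = "\<lambda>s. \<eta> (t1 + t2 - s)"
  have "conv t1 t2 (dI t1 t2 (dI t1 t2 u)) \<eta> = integral {t1..t2} (\<lambda>s. dI t1 t2 (dI t1 t2 u) s * ?w s)"
    unfolding conv_def ..
  also have "\<dots> = dI t1 t2 u t2 * \<eta> t1 - dI t1 t2 u t1 * \<eta> t2
      - integral {t1..t2} (\<lambda>s. dI t1 t2 u s * dI t1 t2 ?w s)"
    using integral_by_parts_C2[OF assms(1,2) C2_reflect(1)[OF assms(1,3)]] by simp
  also have "integral {t1..t2} (\<lambda>s. dI t1 t2 u s * dI t1 t2 ?w s)
      = - conv t1 t2 (dI t1 t2 u) (dI t1 t2 \<eta>)"
    unfolding conv_def integral_neg[symmetric]
    by (rule integral_cong) (simp add: C2_reflect(2)[OF assms(1,3)])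
  finally show ?thesis by simp
qed

lemma dI_add_mult:
  assumes "t1 < t2" "C2 t1 t2 u" "C2 t1 t2 \<eta>" "s \<in> {t1..t2}"
  shows "dI t1 t2 (\<lambda>s. u s + c * \<eta> s) s = dI t1 t2 u s + c * dI t1 t2 \<eta> s"
  using assms
  by (intro dI_eqI has_vector_derivative_add has_vector_derivative_mult_right
      C2_has_vector_derivative)

lemma Itau_add_mult:
  assumes "t1 < t2" "continuous_on {t1..t2} f" "C2 t1 t2 u" "C2 t1 t2 \<eta>"
  shows "Itau t1 t2 m k f f1 f2 (\<lambda>s. u s + c * \<eta> s) = Itau t1 t2 m k f f1 f2 u
    + c * (m * conv t1 t2 (dI t1 t2 u) (dI t1 t2 \<eta>) + k * conv t1 t2 u \<eta> - conv t1 t2 f \<eta>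
           - f1 * \<eta> t2 + f2 * \<eta> t1)
    + c\<^sup>2 * (m / 2 * conv t1 t2 (dI t1 t2 \<eta>) (dI t1 t2 \<eta>) + k / 2 * conv t1 t2 \<eta> \<eta>)"
proof -
  note cu = C2_continuous_on[OF assms(3)] and c\<eta> = C2_continuous_on[OF assms(4)]
  have "conv t1 t2 (dI t1 t2 (\<lambda>s. u s + c * \<eta> s)) (dI t1 t2 (\<lambda>s. u s + c * \<eta> s)) =
      conv t1 t2 (\<lambda>s. dI t1 t2 u s + c * dI t1 t2 \<eta> s) (\<lambda>s. dI t1 t2 u s + c * dI t1 t2 \<eta> s)"
    by (rule conv_cong) (simp_all add: dI_add_mult assms)
  then show ?thesis
    unfolding Itau_def
    by (simp add: conv_add_mult_self cu c\<eta> conv_add_right[OF assms(2) cu(1)]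
        continuous_on_mult_left conv_mult_right algebra_simps)
qed

lemma Itau_first_variation:
  assumes "t1 < t2" "continuous_on {t1..t2} f" "C2 t1 t2 u" "C2 t1 t2 \<eta>"
  shows "((\<lambda>\<epsilon>. Itau t1 t2 m k f f1 f2 (\<lambda>s. u s + \<epsilon> * \<eta> s)) has_real_derivative
      conv t1 t2 (\<lambda>s. m * dI t1 t2 (dI t1 t2 u) s + k * u s - f s) \<eta>
      + (m * dI t1 t2 u t1 - f1) * \<eta> t2 + (f2 - m * dI t1 t2 u t2) * \<eta> t1) (at 0)"
proof -
  note cu = C2_continuous_on[OF assms(3)] and c\<eta> = C2_continuous_on[OF assms(4)]
  define B where "B = m * conv t1 t2 (dI t1 t2 u) (dI t1 t2 \<eta>) + k * conv t1 t2 u \<eta>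
    - conv t1 t2 f \<eta> - f1 * \<eta> t2 + f2 * \<eta> t1"
  have "((\<lambda>\<epsilon>. Itau t1 t2 m k f f1 f2 (\<lambda>s. u s + \<epsilon> * \<eta> s)) has_real_derivative B) (at 0)"
    unfolding Itau_add_mult[OF assms] B_def[symmetric] by (auto intro!: derivative_eq_intros)
  moreover have "B = conv t1 t2 (\<lambda>s. m * dI t1 t2 (dI t1 t2 u) s + k * u s - f s) \<eta>
      + (m * dI t1 t2 u t1 - f1) * \<eta> t2 + (f2 - m * dI t1 t2 u t2) * \<eta> t1"
    unfolding B_def conv_deriv_deriv[OF assms(1,3,4)]
    by (simp add: conv_diff_left conv_add_left conv_mult_left continuous_on_mult_left
        continuous_on_add cu c\<eta> assms(2) algebra_simps)
  ultimately show ?thesis by simp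
qed

lemma C2_orthogonal_imp_zero:
  assumes "t1 < t2" and cg: "continuous_on {t1..t2} g"
    and orth: "\<And>\<eta>. C2 t1 t2 \<eta> \<Longrightarrow> \<eta> t1 = 0 \<Longrightarrow> \<eta> t2 = 0 \<Longrightarrow>
      integral {t1..t2} (\<lambda>s. g s * \<eta> s) = 0"
    and s: "s \<in> {t1..t2}"
  shows "g s = 0"
proof -
  \<comment> \<open>Test against a second primitive \<open>W\<close> of \<open>g\<close>; the constant \<open>c\<close> makes \<open>W\<close> vanish at \<open>t2\<close>.\<close>
  define c where "c = integral {t1..t2} (\<lambda>r. integral {t1..r} g) / (t2 - t1)"
  define G where "G r = integral {t1..r} g - c" for r
  define W where "W r = integral {t1..r} G" for r
  have dG: "(G has_vector_derivative g r) (at r within {t1..t2})" if "r \<in> {t1..t2}" for r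
    unfolding G_def using integral_has_vector_derivative[OF cg that]
    by (auto intro!: derivative_eq_intros)
  have cG: "continuous_on {t1..t2} G" by (rule continuous_on_vector_derivative[OF dG])
  have dW: "(W has_vector_derivative G r) (at r within {t1..t2})" if "r \<in> {t1..t2}" for r
    unfolding W_def by (rule integral_has_vector_derivative[OF cG that])
  have C2W: "C2 t1 t2 W" by (rule C2I[OF assms(1) dW dG cg])
  have dI_W: "dI t1 t2 W r = G r" and dI_dI_W: "dI t1 t2 (dI t1 t2 W) r = g r"
    if "r \<in> {t1..t2}" for r
    using that by (auto intro!: dI_eqI dI_has_vector_derivative dW dG assms(1))
  have W1: "W t1 = 0" by (simp add: W_def)
  have "W t2 = integral {t1..t2} (\<lambda>r. integral {t1..r} g) - integral {t1..t2} (\<lambda>r. c)"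
    unfolding W_def G_def
    by (rule integral_diff)
      (auto intro: integrable_continuous_real continuous_on_vector_derivative
        integral_has_vector_derivative[OF cg])
  then have W2: "W t2 = 0" using assms(1) by (simp add: c_def)
  have "integral {t1..t2} (\<lambda>s. dI t1 t2 (dI t1 t2 W) s * W s)
      = - integral {t1..t2} (\<lambda>s. dI t1 t2 W s * dI t1 t2 W s)"
    using integral_by_parts_C2[OF assms(1) C2W C2W] by (simp add: W1 W2)
  moreover have "integral {t1..t2} (\<lambda>s. dI t1 t2 (dI t1 t2 W) s * W s)
      = integral {t1..t2} (\<lambda>s. g s * W s)"
    by (rule integral_cong) (simp add: dI_dI_W)
  moreover have "integral {t1..t2} (\<lambda>s. dI t1 t2 W s * dI t1 t2 W s)
      = integral {t1..t2} (\<lambda>s. G s * G s)"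
    by (rule integral_cong) (simp add: dI_W)
  ultimately have "integral {t1..t2} (\<lambda>s. G s * G s) = 0"
    using orth[OF C2W W1 W2] by linarith
  then have "((\<lambda>s. G s * G s) has_integral 0) {t1..t2}"
    using integrable_integral[OF integrable_continuous_real[OF continuous_on_mult[OF cG cG]]]
    by simp
  then have G0: "G r = 0" if "r \<in> {t1..t2}" for r
  proof -
    have "G r * G r = 0"
      by (rule has_integral_0_cbox_imp_0[of t1 t2 "\<lambda>s. G s * G s"])
        (use cG \<open>(_ has_integral 0) _\<close> assms(1) that in \<open>auto intro!: continuous_intros\<close>)
    then show ?thesis by simp
  qed
  have "(G has_vector_derivative 0) (at s within {t1..t2})"
    by (rule has_vector_derivative_transform[OF s _ has_vector_derivative_const]) (simp add: G0)
  then show ?thesis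
    using vector_derivative_unique_within_closed_interval[of t1 t2 s G "g s" 0] dG[OF s] assms(1) s
    by simp
qed

lemma vanishing_first_variation:
  assumes "t1 < t2" "continuous_on {t1..t2} g"
    and var: "\<And>\<eta>. C2 t1 t2 \<eta> \<Longrightarrow> conv t1 t2 g \<eta> + a * \<eta> t2 + b * \<eta> t1 = 0"
  shows "\<forall>s\<in>{t1..t2}. g s = 0" "a = 0" "b = 0"
proof -
  \<comment> \<open>By the definition of \<open>conv\<close>, reflected test functions give the plain integral.\<close>
  have "integral {t1..t2} (\<lambda>s. g s * \<eta> s) = 0"
    if "C2 t1 t2 \<eta>" "\<eta> t1 = 0" "\<eta> t2 = 0" for \<eta>
    using var[OF C2_reflect(1)[OF assms(1) that(1)]] that(2,3) by (simp add: conv_def)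
  then show g0: "\<forall>s\<in>{t1..t2}. g s = 0"
    using C2_orthogonal_imp_zero[OF assms(1,2)] by blast
  have "conv t1 t2 g \<eta> = 0" for \<eta>
    using conv_cong[of t1 t2 g "\<lambda>s. 0" \<eta> \<eta>] g0 by (simp add: conv_def)
  moreover have "C2 t1 t2 (\<lambda>s. s - t1)" "C2 t1 t2 (\<lambda>s. t2 - s)"
    by (rule C2I[OF assms(1)], auto intro!: derivative_eq_intros)+
  ultimately show "a = 0" "b = 0"
    using var[of "\<lambda>s. s - t1"] var[of "\<lambda>s. t2 - s"] assms(1) by simp_all
qed

theorem proposition3:
  fixes t1 t2 m k f1 f2 :: real and f u :: "real \<Rightarrow> real"
  assumes "0 \<le> t1" and "t1 < t2" and "m > 0" and "k > 0"
    and "continuous_on {t1..t2} f"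
    and "C2 t1 t2 u"
    and stat: "\<And>\<eta>. C2 t1 t2 \<eta> \<Longrightarrow>
       ((\<lambda>\<epsilon>. Itau t1 t2 m k f f1 f2 (\<lambda>s. u s + \<epsilon> * \<eta> s)) has_real_derivative 0) (at 0)"
  shows "(\<forall>s\<in>{t1<..<t2}. m * dI t1 t2 (dI t1 t2 u) s + k * u s = f s)
         \<and> dI t1 t2 u t1 = f1 / m \<and> dI t1 t2 u t2 = f2 / m"
proof -
  let ?g = "\<lambda>s. m * dI t1 t2 (dI t1 t2 u) s + k * u s - f s"
  have "conv t1 t2 ?g \<eta> + (m * dI t1 t2 u t1 - f1) * \<eta> t2 + (f2 - m * dI t1 t2 u t2) * \<eta> t1 = 0"
    if "C2 t1 t2 \<eta>" for \<eta>
    using DERIV_unique[OF Itau_first_variation[OF assms(2,5,6) that] stat[OF that]] .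
  moreover have "continuous_on {t1..t2} ?g"
    by (intro continuous_intros C2_continuous_on assms(5,6))
  ultimately have "\<forall>s\<in>{t1..t2}. ?g s = 0" "m * dI t1 t2 u t1 - f1 = 0" "f2 - m * dI t1 t2 u t2 = 0"
    using vanishing_first_variation[OF assms(2)] by blast+
  then show ?thesis
    using \<open>m > 0\<close> by (auto simp: field_simps)
qed

end
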